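(* Let $M$ be a constant symmetric positive definite symplectic $2n\times 2n$ matrix and let $\Gamma_M=\phi_M^{-(Q-2)/4}$. Then $\mathcal L_M\Gamma_M(z)=0$ for all $z\in\mathbb R^{2n+1}\setminus\{0\}$.
   Context: Points of $\mathbb R^{2n+1}$ are written $(x,t)$, $x\in\mathbb R^{2n}$, $t\in\mathbb R$. $J=\begin{pmatrix}0&-\mathbb I_n\\ \mathbb I_n&0\end{pmatrix}$, $Q=2n+2$; $M$ symplectic means $M^{-1}=J^tMJ$. $X_i=\partial_{x_i}+2(Jx)_i\partial_t$ ($i=1,\dots,2n$), $D^2_{\mathbb H}\psi=\big(\tfrac12(X_iX_j+X_jX_i)\psi\big)_{i,j}$, $\mathcal L_M\psi=\mathrm{tr}(MD^2_{\mathbb H}\psi)$, and $\phi_M(x,t)=\langle M^{-1}x,x\rangle^2+t^2$. *)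

theory Defs
  imports "HOL-Analysis.Analysis"
begin

text \<open>Coordinates of R^(2n) are indexed by the type 'n + 'n: Inl k is the k-th of the
first n coordinates, Inr k the k-th of the last n. Points of R^(2n+1) are pairs (x,t).\<close>

definition Jmat :: "real^('n::finite + 'n)^('n + 'n)" where
  "Jmat = (\<chi> i j. case (i, j) of
              (Inl a, Inr b) \<Rightarrow> (if a = b then -1 else 0)
            | (Inr a, Inl b) \<Rightarrow> (if a = b then 1 else 0)
            | _ \<Rightarrow> 0)"

definition symplectic :: "real^('n::finite + 'n)^('n + 'n) \<Rightarrow> bool" where
  "symplectic M \<longleftrightarrow> invertible M \<and> matrix_inv M = transpose Jmat ** M ** Jmat"

definition pos_def :: "real^'m^'m \<Rightarrow> bool" where
  "pos_def M \<longleftrightarrow> (\<forall>x. x \<noteq> 0 \<longrightarrow> x \<bullet> (M *v x) > 0)"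

definition partial_x :: "('n::finite + 'n) \<Rightarrow> ((real^('n + 'n)) \<times> real \<Rightarrow> real)
    \<Rightarrow> (real^('n + 'n)) \<times> real \<Rightarrow> real" where
  "partial_x i \<psi> z = deriv (\<lambda>s. \<psi> (fst z + s *\<^sub>R axis i 1, snd z)) 0"

definition partial_t :: "((real^('n::finite + 'n)) \<times> real \<Rightarrow> real)
    \<Rightarrow> (real^('n + 'n)) \<times> real \<Rightarrow> real" where
  "partial_t \<psi> z = deriv (\<lambda>s. \<psi> (fst z, snd z + s)) 0"

definition Xfield :: "('n::finite + 'n) \<Rightarrow> ((real^('n + 'n)) \<times> real \<Rightarrow> real)
    \<Rightarrow> (real^('n + 'n)) \<times> real \<Rightarrow> real" where
  "Xfield i \<psi> z = partial_x i \<psi> z + 2 * (Jmat *v fst z) $ i * partial_t \<psi> z"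

definition D2H :: "((real^('n::finite + 'n)) \<times> real \<Rightarrow> real)
    \<Rightarrow> (real^('n + 'n)) \<times> real \<Rightarrow> real^('n + 'n)^('n + 'n)" where
  "D2H \<psi> z = (\<chi> i j. (Xfield i (Xfield j \<psi>) z + Xfield j (Xfield i \<psi>) z) / 2)"

definition LM :: "real^('n::finite + 'n)^('n + 'n) \<Rightarrow> ((real^('n + 'n)) \<times> real \<Rightarrow> real)
    \<Rightarrow> (real^('n + 'n)) \<times> real \<Rightarrow> real" where
  "LM M \<psi> z = trace (M ** D2H \<psi> z)"

definition phiM :: "real^('n::finite + 'n)^('n + 'n) \<Rightarrow> (real^('n + 'n)) \<times> real \<Rightarrow> real" where
  "phiM M z = ((matrix_inv M *v fst z) \<bullet> fst z)^2 + (snd z)^2"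

definition Qdim :: "'n::finite itself \<Rightarrow> real" where
  "Qdim _ = 2 * real CARD('n) + 2"

definition GammaM :: "real^('n::finite + 'n)^('n + 'n) \<Rightarrow> (real^('n + 'n)) \<times> real \<Rightarrow> real" where
  "GammaM M z = phiM M z powr (- (Qdim TYPE('n) - 2) / 4)"

end

theory Submission
  imports Defs
begin

text \<open>Write \<open>A = M\<^sup>-\<^sup>1\<close>, \<open>q = \<langle>Ax,x\<rangle>\<close> and \<open>\<phi> = q\<^sup>2 + t\<^sup>2\<close>. The horizontal gradient of \<open>\<phi>\<close> is
  \<open>g = 4q Ax + 4t Jx\<close>, and differentiating \<open>\<phi>\<^sup>r\<close> twice along the fields \<open>X\<^sub>i\<close> gives the
  symmetrized horizontal Hessian
  \<open>r(r-1)\<phi>\<^sup>r\<^sup>-\<^sup>2 g g\<^sup>T + r\<phi>\<^sup>r\<^sup>-\<^sup>1 (8 Ax (Ax)\<^sup>T + 4q A + 8 Jx (Jx)\<^sup>T)\<close>,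
  the antisymmetric \<open>J\<close>-terms cancelling. Tracing against \<open>M\<close> needs
  \<open>\<langle>MAx,Ax\<rangle> = q\<close>, \<open>\<langle>MJx,Ax\<rangle> = \<langle>Jx,x\<rangle> = 0\<close>, and, because \<open>M\<close> is symplectic,
  \<open>\<langle>MJx,Jx\<rangle> = \<langle>J\<^sup>TMJx,x\<rangle> = q\<close>; hence \<open>\<langle>Mg,g\<rangle> = 16q\<phi>\<close> and
  \<open>\<L>\<^sub>M \<phi>\<^sup>r = 8r(2r + n) q \<phi>\<^sup>r\<^sup>-\<^sup>1\<close>, which vanishes for \<open>r = -n/2 = -(Q-2)/4\<close>.\<close>

lemma matrix_mul_matrix_inv:
  fixes M :: "real^'m^'m"
  assumes "invertible M"
  shows "M ** matrix_inv M = mat 1"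
  using someI_ex[OF assms[unfolded invertible_def]] unfolding matrix_inv_def by auto

definition qform :: "real^'m^'m \<Rightarrow> real^'m \<Rightarrow> real" where
  "qform A x = (A *v x) \<bullet> x"

lemma qform_along_axis:
  fixes A :: "real^'m^'m"
  assumes "transpose A = A"
  shows "qform A (x + s *\<^sub>R axis j 1) = qform A x + s * (2 * (A *v x) $ j) + s\<^sup>2 * A $ j $ j"
proof -
  have "(A *v axis j 1) \<bullet> x = (x v* A) \<bullet> axis j 1"
    by (subst inner_commute) (rule dot_lmul_matrix[symmetric])
  also have "x v* A = A *v x"
    using assms vector_transpose_matrix[of x A] by simp
  finally have "(A *v axis j 1) \<bullet> x = (A *v x) $ j"
    by (simp add: inner_axis)
  then show ?thesis
    by (simp add: qform_def matrix_vector_right_distrib matrix_vector_mult_scaleR inner_add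
        inner_scaleR_left inner_scaleR_right inner_axis matrix_vector_mult_basis column_def
        algebra_simps power2_eq_square)
qed

lemma matrix_vector_along_axis:
  "(A *v (x + s *\<^sub>R axis j 1)) $ i = (A *v x) $ i + s * A $ i $ j"
  by (simp add: matrix_vector_right_distrib matrix_vector_mult_scaleR matrix_vector_mult_basis
      column_def)

definition outer_prod :: "real^'m \<Rightarrow> real^'m \<Rightarrow> real^'m^'m" where
  "outer_prod u v = (\<chi> i j. u $ i * v $ j)"

lemma trace_mult_outer_prod: "trace (M ** outer_prod u v) = v \<bullet> (M *v u)"
  unfolding trace_def outer_prod_def matrix_matrix_mult_def inner_vec_def matrix_vector_mult_def
  by (simp add: sum_distrib_left algebra_simps)

lemma trace_mult_scaleR: "trace (M ** (c *\<^sub>R X)) = c * trace (M ** X :: real^'m^'m)"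
  by (simp add: trace_def matrix_matrix_mult_def sum_distrib_left algebra_simps)

lemma sum_UNIV_Plus:
  "(\<Sum>i\<in>UNIV. f i) = (\<Sum>a\<in>UNIV. f (Inl a)) + (\<Sum>b\<in>UNIV. f (Inr b))"
  for f :: "'a::finite + 'b::finite \<Rightarrow> 'c::comm_monoid_add"
  by (subst UNIV_Plus_UNIV[symmetric], subst sum.Plus) (simp_all add: o_def)

lemma Jmat_mult_Inl: "(Jmat *v x) $ Inl a = - x $ Inr a"
  unfolding matrix_vector_mult_def
  by (simp add: sum_UNIV_Plus Jmat_def if_distrib[of "\<lambda>c. c * _"] cong: if_cong)

lemma Jmat_mult_Inr: "(Jmat *v x) $ Inr a = x $ Inl a"
  unfolding matrix_vector_mult_def
  by (simp add: sum_UNIV_Plus Jmat_def if_distrib[of "\<lambda>c. c * _"] cong: if_cong)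

lemma inner_Jmat_self: "x \<bullet> (Jmat *v x) = 0"
  unfolding inner_vec_def
  by (simp add: sum_UNIV_Plus Jmat_mult_Inl Jmat_mult_Inr sum_negf algebra_simps)

lemma Jmat_antisym: "Jmat $ j $ i = - Jmat $ i $ j"
  by (cases i; cases j) (simp_all add: Jmat_def)

lemma symplectic_matrix_inv:
  assumes "symplectic M"
  shows "M ** matrix_inv M = mat 1" "matrix_inv M = transpose Jmat ** M ** Jmat"
  using assms matrix_mul_matrix_inv[of M] unfolding symplectic_def by simp_all

lemma symmetric_symplectic_matrix_inv:
  assumes "transpose M = M" "symplectic M"
  shows "transpose (matrix_inv M) = matrix_inv M"
  by (simp add: symplectic_matrix_inv(2)[OF assms(2)] matrix_transpose_mul assms(1) matrix_mul_assoc)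

lemma qform_Jmat_symplectic:
  assumes "symplectic M"
  shows "qform M (Jmat *v x) = qform (matrix_inv M) x"
proof -
  have "qform M (Jmat *v x) = (x v* transpose Jmat) \<bullet> (M *v (Jmat *v x))"
    by (simp add: qform_def inner_commute)
  also have "\<dots> = x \<bullet> ((transpose Jmat ** M ** Jmat) *v x)"
    by (simp add: dot_lmul_matrix matrix_vector_mul_assoc matrix_mul_assoc
        del: vector_transpose_matrix)
  finally show ?thesis
    by (simp add: qform_def symplectic_matrix_inv(2)[OF assms] inner_commute)
qed

lemma partial_x_eqI:
  assumes "((\<lambda>s. \<psi> (x + s *\<^sub>R axis i 1, t)) has_real_derivative D) (at 0)"
  shows "partial_x i \<psi> (x, t) = D"
  using assms by (simp add: partial_x_def DERIV_imp_deriv)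

lemma partial_t_eqI:
  assumes "((\<lambda>s. \<psi> (x, t + s)) has_real_derivative D) (at 0)"
  shows "partial_t \<psi> (x, t) = D"
  using assms by (simp add: partial_t_def DERIV_imp_deriv)

lemma Xfield_cong_open:
  assumes "open S" "z \<in> S" "\<And>w. w \<in> S \<Longrightarrow> \<psi> w = \<psi>' w"
  shows "Xfield i \<psi> z = Xfield i \<psi>' z"
proof -
  have agree: "eventually (\<lambda>s. \<psi> (\<gamma> s) = \<psi>' (\<gamma> s)) (nhds 0)"
    if "continuous_on UNIV \<gamma>" "\<gamma> 0 = z" for \<gamma> :: "real \<Rightarrow> _"
  proof -
    have "open (\<gamma> -` S)" using assms(1) that(1) by (rule open_vimage)
    then show ?thesis
      using assms(2,3) that(2) by (auto simp: eventually_nhds)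
  qed
  have "partial_x i \<psi> z = partial_x i \<psi>' z"
    unfolding partial_x_def by (rule deriv_cong_ev[OF agree refl]) (auto intro!: continuous_intros)
  moreover have "partial_t \<psi> z = partial_t \<psi>' z"
    unfolding partial_t_def by (rule deriv_cong_ev[OF agree refl]) (auto intro!: continuous_intros)
  ultimately show ?thesis by (simp add: Xfield_def)
qed

lemma DERIV_scaled_powr_mult:
  fixes P G :: "real \<Rightarrow> real"
  assumes "(P has_real_derivative P') (at s)" "P s > 0" "(G has_real_derivative G') (at s)"
  shows "((\<lambda>s. c * P s powr r * G s) has_real_derivative
           c * (r * P s powr (r - 1) * P' * G s + P s powr r * G')) (at s)"
  using DERIV_mult[OF DERIV_cmult[OF DERIV_fun_powr[OF assms(1,2), of r], of c] assms(3)]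
  by (simp add: algebra_simps)

definition gauge :: "real^'m^'m \<Rightarrow> (real^'m) \<times> real \<Rightarrow> real" where
  "gauge A z = (qform A (fst z))\<^sup>2 + (snd z)\<^sup>2"

lemma phiM_eq_gauge: "phiM M = gauge (matrix_inv M)"
  by (simp add: fun_eq_iff phiM_def gauge_def qform_def)

lemma open_gauge_pos: "open {z. gauge A z > 0}"
proof -
  have "continuous_on UNIV (\<lambda>z. A *v fst z)"
    by (intro bounded_linear.continuous_on[OF matrix_vector_mul_bounded_linear] continuous_intros)
  then show ?thesis
    unfolding gauge_def qform_def by (intro open_Collect_less continuous_intros)
qed

lemma gauge_matrix_inv_pos:
  assumes "pos_def M" "invertible M" "z \<noteq> 0"
  shows "gauge (matrix_inv M) z > 0"
proof (cases "fst z = 0")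
  case True
  then have "snd z \<noteq> 0" using assms(3) by (simp add: prod_eq_iff)
  then show ?thesis by (simp add: gauge_def add_nonneg_pos)
next
  case False
  define a where "a = matrix_inv M *v fst z"
  have Ma: "M *v a = fst z"
    by (simp add: a_def matrix_vector_mul_assoc matrix_mul_matrix_inv[OF assms(2)])
  then have "a \<noteq> 0" using False by auto
  then have "qform (matrix_inv M) (fst z) > 0"
    using assms(1) Ma unfolding pos_def_def qform_def a_def[symmetric]
    by (metis inner_commute)
  then show ?thesis by (simp add: gauge_def add_pos_nonneg)
qed

lemma gauge_along_x:
  assumes "transpose A = A"
  shows "gauge A (x + s *\<^sub>R axis j 1, t) = (qform A x + s * (2 * (A *v x) $ j) + s\<^sup>2 * A $ j $ j)\<^sup>2 + t\<^sup>2"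
  by (simp add: gauge_def qform_along_axis[OF assms])

definition gauge_Xgrad :: "real^('n::finite + 'n)^('n + 'n) \<Rightarrow> (real^('n + 'n)) \<times> real \<Rightarrow> real^('n + 'n)" where
  "gauge_Xgrad A z = (4 * qform A (fst z)) *\<^sub>R (A *v fst z) + (4 * snd z) *\<^sub>R (Jmat *v fst z)"

lemma Xfield_gauge_powr:
  fixes A :: "real^('n::finite + 'n)^('n + 'n)"
  assumes "transpose A = A" "gauge A (x, t) > 0"
  shows "Xfield i (\<lambda>w. gauge A w powr r) (x, t) = r * gauge A (x, t) powr (r - 1) * gauge_Xgrad A (x, t) $ i"
proof -
  have gauge_x: "((\<lambda>s. gauge A (x + s *\<^sub>R axis i 1, t)) has_real_derivative 4 * qform A x * (A *v x) $ i) (at 0)"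
    unfolding gauge_along_x[OF assms(1)] by (auto intro!: derivative_eq_intros)
  have dx: "partial_x i (\<lambda>w. gauge A w powr r) (x, t) = r * gauge A (x, t) powr (r - 1) * (4 * qform A x * (A *v x) $ i)"
    using DERIV_fun_powr[OF gauge_x, of r] assms(2) by (intro partial_x_eqI) simp
  have gauge_t: "((\<lambda>s. gauge A (x, t + s)) has_real_derivative 2 * t) (at 0)"
    unfolding gauge_def by (auto intro!: derivative_eq_intros)
  have dt: "partial_t (\<lambda>w. gauge A w powr r) (x, t) = r * gauge A (x, t) powr (r - 1) * (2 * t)"
    using DERIV_fun_powr[OF gauge_t, of r] assms(2) by (intro partial_t_eqI) simp
  show ?thesis
    by (simp add: Xfield_def dx dt gauge_Xgrad_def algebra_simps)
qed

lemma Xfield_gauge_powr_Xgrad: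
  fixes A :: "real^('n::finite + 'n)^('n + 'n)"
  assumes "transpose A = A" "gauge A (x, t) > 0"
  defines "g \<equiv> gauge_Xgrad A (x, t)" and "a \<equiv> A *v x" and "b \<equiv> Jmat *v x"
  shows "Xfield j (\<lambda>w. c * gauge A w powr r * gauge_Xgrad A w $ i) (x, t) =
    c * (r * gauge A (x, t) powr (r - 1) * g $ j * g $ i + gauge A (x, t) powr r *
      (8 * a $ j * a $ i + 4 * qform A x * A $ i $ j + 4 * t * Jmat $ i $ j + 8 * b $ j * b $ i))"
proof -
  have gauge_x: "((\<lambda>s. gauge A (x + s *\<^sub>R axis j 1, t)) has_real_derivative 4 * qform A x * a $ j) (at 0)"
    unfolding gauge_along_x[OF assms(1)] a_def by (auto intro!: derivative_eq_intros)
  have Xgrad_x: "((\<lambda>s. gauge_Xgrad A (x + s *\<^sub>R axis j 1, t) $ i) has_real_derivative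
      4 * (2 * a $ j * a $ i + qform A x * A $ i $ j) + 4 * t * Jmat $ i $ j) (at 0)"
  proof -
    have "(\<lambda>s. gauge_Xgrad A (x + s *\<^sub>R axis j 1, t) $ i) = (\<lambda>s.
        4 * (qform A x + s * (2 * a $ j) + s\<^sup>2 * A $ j $ j) * (a $ i + s * A $ i $ j) +
        4 * t * (b $ i + s * Jmat $ i $ j))"
      by (simp add: fun_eq_iff gauge_Xgrad_def qform_along_axis[OF assms(1)]
          matrix_vector_along_axis a_def b_def)
    then show ?thesis by (auto intro!: derivative_eq_intros)
  qed
  have dx: "partial_x j (\<lambda>w. c * gauge A w powr r * gauge_Xgrad A w $ i) (x, t) =
      c * (r * gauge A (x, t) powr (r - 1) * (4 * qform A x * a $ j) * g $ i + gauge A (x, t) powr r *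
        (4 * (2 * a $ j * a $ i + qform A x * A $ i $ j) + 4 * t * Jmat $ i $ j))"
    using DERIV_scaled_powr_mult[OF gauge_x _ Xgrad_x, of c r] assms(2) unfolding g_def
    by (intro partial_x_eqI) simp
  have gauge_t: "((\<lambda>s. gauge A (x, t + s)) has_real_derivative 2 * t) (at 0)"
    unfolding gauge_def by (auto intro!: derivative_eq_intros)
  have Xgrad_t: "((\<lambda>s. gauge_Xgrad A (x, t + s) $ i) has_real_derivative 4 * b $ i) (at 0)"
    unfolding gauge_Xgrad_def b_def by (auto intro!: derivative_eq_intros)
  have dt: "partial_t (\<lambda>w. c * gauge A w powr r * gauge_Xgrad A w $ i) (x, t) =
      c * (r * gauge A (x, t) powr (r - 1) * (2 * t) * g $ i + gauge A (x, t) powr r * (4 * b $ i))"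
    using DERIV_scaled_powr_mult[OF gauge_t _ Xgrad_t, of c r] assms(2) unfolding g_def
    by (intro partial_t_eqI) simp
  show ?thesis
    unfolding Xfield_def dx dt by (simp add: g_def gauge_Xgrad_def a_def b_def algebra_simps)
qed

lemma Xfield_Xfield_gauge_powr:
  fixes A :: "real^('n::finite + 'n)^('n + 'n)"
  assumes "transpose A = A" "gauge A (x, t) > 0"
  defines "g \<equiv> gauge_Xgrad A (x, t)" and "a \<equiv> A *v x" and "b \<equiv> Jmat *v x"
  shows "Xfield j (Xfield i (\<lambda>w. gauge A w powr r)) (x, t) =
    r * (r - 1) * gauge A (x, t) powr (r - 2) * g $ j * g $ i + r * gauge A (x, t) powr (r - 1) *
      (8 * a $ j * a $ i + 4 * qform A x * A $ i $ j + 4 * t * Jmat $ i $ j + 8 * b $ j * b $ i)"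
proof -
  have "Xfield j (Xfield i (\<lambda>w. gauge A w powr r)) (x, t) =
      Xfield j (\<lambda>w. r * gauge A w powr (r - 1) * gauge_Xgrad A w $ i) (x, t)"
  proof (rule Xfield_cong_open[OF open_gauge_pos])
    fix w :: "(real^('n + 'n)) \<times> real"
    assume "w \<in> {z. gauge A z > 0}"
    then show "Xfield i (\<lambda>w. gauge A w powr r) w = r * gauge A w powr (r - 1) * gauge_Xgrad A w $ i"
      by (cases w) (simp add: Xfield_gauge_powr[OF assms(1)])
  qed (use assms(2) in simp)
  also have "\<dots> = r * ((r - 1) * gauge A (x, t) powr (r - 1 - 1) * g $ j * g $ i + gauge A (x, t) powr (r - 1) *
      (8 * a $ j * a $ i + 4 * qform A x * A $ i $ j + 4 * t * Jmat $ i $ j + 8 * b $ j * b $ i))"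
    unfolding g_def a_def b_def by (rule Xfield_gauge_powr_Xgrad[OF assms(1,2)])
  finally show ?thesis by (simp add: algebra_simps)
qed

lemma D2H_gauge_powr:
  fixes A :: "real^('n::finite + 'n)^('n + 'n)"
  assumes "transpose A = A" "gauge A (x, t) > 0"
  defines "g \<equiv> gauge_Xgrad A (x, t)" and "a \<equiv> A *v x" and "b \<equiv> Jmat *v x"
  shows "D2H (\<lambda>w. gauge A w powr r) (x, t) =
    (r * (r - 1) * gauge A (x, t) powr (r - 2)) *\<^sub>R outer_prod g g + (r * gauge A (x, t) powr (r - 1)) *\<^sub>R
      (8 *\<^sub>R outer_prod a a + (4 * qform A x) *\<^sub>R A + 8 *\<^sub>R outer_prod b b)"
proof -
  have "D2H (\<lambda>w. gauge A w powr r) (x, t) $ i $ j = (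
    (r * (r - 1) * gauge A (x, t) powr (r - 2)) *\<^sub>R outer_prod g g + (r * gauge A (x, t) powr (r - 1)) *\<^sub>R
      (8 *\<^sub>R outer_prod a a + (4 * qform A x) *\<^sub>R A + 8 *\<^sub>R outer_prod b b)) $ i $ j" for i j
  proof -
    have "A $ j $ i = A $ i $ j"
      using arg_cong[OF assms(1), of "\<lambda>X. X $ i $ j"] by (simp add: transpose_def)
    then show ?thesis
      unfolding D2H_def vec_lambda_beta Xfield_Xfield_gauge_powr[OF assms(1,2)] g_def a_def b_def
      by (simp add: outer_prod_def Jmat_antisym[of j i] field_simps)
  qed
  then show ?thesis by (simp add: vec_eq_iff)
qed

lemma inner_symplectic_matrix_inv_Jmat:
  fixes M :: "real^('n::finite + 'n)^('n + 'n)" and x :: "real^('n + 'n)"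
  assumes "transpose M = M" "symplectic M"
  defines "a \<equiv> matrix_inv M *v x" and "b \<equiv> Jmat *v x"
  shows "a \<bullet> (M *v a) = qform (matrix_inv M) x" "a \<bullet> (M *v b) = 0"
    "b \<bullet> (M *v a) = 0" "b \<bullet> (M *v b) = qform (matrix_inv M) x"
proof -
  have Ma: "M *v a = x"
    by (simp add: a_def matrix_vector_mul_assoc symplectic_matrix_inv(1)[OF assms(2)])
  show "a \<bullet> (M *v a) = qform (matrix_inv M) x"
    by (simp add: Ma qform_def flip: a_def)
  have "a \<bullet> (M *v b) = (a v* M) \<bullet> b" by (rule dot_lmul_matrix[symmetric])
  also have "a v* M = x"
    using vector_transpose_matrix[of a M] assms(1) Ma by simp
  finally show "a \<bullet> (M *v b) = 0" by (simp add: b_def inner_Jmat_self)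
  show "b \<bullet> (M *v a) = 0"
    using Ma by (simp add: b_def inner_commute inner_Jmat_self)
  show "b \<bullet> (M *v b) = qform (matrix_inv M) x"
    using qform_Jmat_symplectic[OF assms(2)] by (simp add: b_def qform_def inner_commute)
qed

lemma inner_gauge_Xgrad_symplectic:
  fixes M :: "real^('n::finite + 'n)^('n + 'n)"
  assumes "transpose M = M" "symplectic M"
  defines "A \<equiv> matrix_inv M"
  shows "gauge_Xgrad A z \<bullet> (M *v gauge_Xgrad A z) = 16 * qform A (fst z) * gauge A z"
proof -
  let ?a = "A *v fst z" and ?b = "Jmat *v fst z" and ?q = "qform A (fst z)"
  have "gauge_Xgrad A z \<bullet> (M *v gauge_Xgrad A z) = 16 * ?q * ?q * (?a \<bullet> (M *v ?a))
      + 16 * ?q * snd z * (?a \<bullet> (M *v ?b) + ?b \<bullet> (M *v ?a)) + 16 * (snd z)\<^sup>2 * (?b \<bullet> (M *v ?b))"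
    by (simp add: gauge_Xgrad_def matrix_vector_right_distrib matrix_vector_mult_scaleR inner_add
        algebra_simps power2_eq_square)
  then show ?thesis
    by (simp add: inner_symplectic_matrix_inv_Jmat[OF assms(1,2), folded A_def] gauge_def
        power2_eq_square algebra_simps)
qed

lemma LM_gauge_powr:
  fixes M :: "real^('n::finite + 'n)^('n + 'n)"
  assumes "transpose M = M" "symplectic M" "gauge (matrix_inv M) z > 0"
  shows "LM M (\<lambda>w. gauge (matrix_inv M) w powr r) z =
    8 * r * (2 * r + CARD('n)) * qform (matrix_inv M) (fst z) * gauge (matrix_inv M) z powr (r - 1)"
proof -
  obtain x t where z: "z = (x, t)" by fastforce
  define A where "A = matrix_inv M"
  define q P where "q = qform A x" and "P = gauge A (x, t)"
  have A_sym: "transpose A = A" and P_pos: "P > 0"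
    using symmetric_symplectic_matrix_inv assms by (auto simp: A_def P_def z)
  have trA: "trace (M ** A) = 2 * CARD('n)"
    by (simp add: A_def symplectic_matrix_inv(1)[OF assms(2)] trace_I)
  have "LM M (\<lambda>w. gauge A w powr r) z = r * (r - 1) * P powr (r - 2) * (16 * q * P)
      + r * P powr (r - 1) * (8 * q + 4 * q * (2 * CARD('n)) + 8 * q)"
    unfolding LM_def z D2H_gauge_powr[OF A_sym P_pos[unfolded P_def]]
    by (simp add: matrix_add_ldistrib trace_add trace_mult_scaleR trace_mult_outer_prod trA
        inner_symplectic_matrix_inv_Jmat[OF assms(1,2), folded A_def]
        inner_gauge_Xgrad_symplectic[OF assms(1,2), folded A_def] flip: q_def P_def)
  also have "r * (r - 1) * P powr (r - 2) * (16 * q * P) = 16 * r * (r - 1) * q * (P powr (r - 2) * P)"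
    by (simp only: mult_ac)
  also have "P powr (r - 2) * P = P powr (r - 1)"
    using powr_mult_base[of P "r - 2"] P_pos by (simp add: mult.commute)
  finally show ?thesis
    by (simp add: A_def P_def q_def z algebra_simps)
qed

theorem mainTheorem3:
  fixes M :: "real^('n::finite + 'n)^('n + 'n)"
  assumes "transpose M = M" and "pos_def M" and "symplectic M"
  shows "\<forall>z. z \<noteq> 0 \<longrightarrow> LM M (GammaM M) z = 0"
proof (intro allI impI)
  fix z :: "(real^('n + 'n)) \<times> real"
  assume "z \<noteq> 0"
  then have gauge_pos: "gauge (matrix_inv M) z > 0"
    using assms(2,3) by (intro gauge_matrix_inv_pos) (simp_all add: symplectic_def)
  have "GammaM M = (\<lambda>w. gauge (matrix_inv M) w powr (- real CARD('n) / 2))"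
    by (simp add: fun_eq_iff GammaM_def phiM_eq_gauge Qdim_def)
  then show "LM M (GammaM M) z = 0"
    by (simp add: LM_gauge_powr[OF assms(1,3) gauge_pos])
qed

end
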